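(* Let $n$ be a positive integer, $x\in\Gamma_n$ and $z\in\{r,b\}^n$. Then \[ \tilde\xi_n(x,z)=\xi_n\bigl(\sigma_{\mathrm{RF}}(x)\bigr)-\mathrm{wt}_{G_x}(z). \]
   Context: Let $[n]=\{1,\dots,n\}$. $\Gamma_n$ is the set of words $x=(x_1,\dots,x_{2n})\in[n]^{2n}$ in which every symbol of $[n]$ occurs exactly twice. Colours are formal symbols $r,b$; $\neg$ swaps them, $\neg^0$ is the identity, $\neg^1=\neg$. $[\,\cdot\,]$ is the Iverson bracket. For $f\in\{r,b\}^{2n}$, $\xi_n(f)=\sum_{i=1}^{2n-1}[f_i\neq f_{i+1}]$. For $z\in\{r,b\}^n$, $\mathcal E_n(x,z)_i=\neg^{[x_i\in\{x_1,\dots,x_{i-1}\}]}z_{x_i}$ ($i\in[2n]$) and $\tilde\xi_n(x,z)=\xi_n(\mathcal E_n(x,z))$. The red-first colouring $\sigma_{\mathrm{RF}}(x)$ has $i$-th entry $r$ if $x_i\notin\{x_1,\dots,x_{i-1}\}$ and $b$ otherwise. For $i\in[2n-1]$, $\eta(x,i)=[x_{i+1}\in\{x_1,\dots,x_i\}]\oplus[x_i\in\{x_1,\dots,x_{i-1}\}]$. For $e\subseteq[n]$, $\theta_x(e)=-\sum_{i=1}^{2n-1}(-1)^{\eta(x,i)}\delta_{e,\{x_i,x_{i+1}\}}$. The BPSP graph $G_x=(V_x,E_x,W_x)$ has $V_x=[n]$, $E_x=\{\{x_i,x_{i+1}\}: i\in[2n-1],\ x_i\neq x_{i+1},\ \theta_x(\{x_i,x_{i+1}\})\neq0\}$,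 $W_x=\theta_x|_{E_x}$. $\mathrm{wt}_{G_x}(z)=\sum_{\{i,j\}\in E_x}W_x(\{i,j\})[z_i\neq z_j]$. *)

theory Defs
  imports Main
begin

datatype colour = R | B

fun cneg :: "colour \<Rightarrow> colour" where
  "cneg R = B" | "cneg B = R"

text \<open>Words are functions on positions 1..2n; x i is the i-th letter.\<close>

definition Gamma :: "nat \<Rightarrow> (nat \<Rightarrow> nat) set" where
  "Gamma n = {x. (\<forall>i\<in>{1..2*n}. x i \<in> {1..n}) \<and>
                 (\<forall>a\<in>{1..n}. card {i\<in>{1..2*n}. x i = a} = 2)}"

definition iver :: "bool \<Rightarrow> int" where
  "iver P = (if P then 1 else 0)"

definition seen :: "(nat \<Rightarrow> nat) \<Rightarrow> nat \<Rightarrow> bool" where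
  "seen x i = (x i \<in> x ` {1..<i})"

definition xi :: "nat \<Rightarrow> (nat \<Rightarrow> colour) \<Rightarrow> int" where
  "xi n f = (\<Sum>i=1..<2*n. iver (f i \<noteq> f (i+1)))"

definition encode :: "(nat \<Rightarrow> nat) \<Rightarrow> (nat \<Rightarrow> colour) \<Rightarrow> nat \<Rightarrow> colour" where
  "encode x z i = (if seen x i then cneg (z (x i)) else z (x i))"

definition xi_tilde :: "nat \<Rightarrow> (nat \<Rightarrow> nat) \<Rightarrow> (nat \<Rightarrow> colour) \<Rightarrow> int" where
  "xi_tilde n x z = xi n (encode x z)"

definition sigma_RF :: "(nat \<Rightarrow> nat) \<Rightarrow> nat \<Rightarrow> colour" where
  "sigma_RF x i = (if seen x i then B else R)"

definition eta :: "(nat \<Rightarrow> nat) \<Rightarrow> nat \<Rightarrow> bool" where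
  "eta x i = (seen x (i+1) \<noteq> seen x i)"

definition theta :: "nat \<Rightarrow> (nat \<Rightarrow> nat) \<Rightarrow> nat set \<Rightarrow> int" where
  "theta n x e = - (\<Sum>i=1..<2*n. (if eta x i then -1 else 1) * iver (e = {x i, x (i+1)}))"

definition bpsp_edges :: "nat \<Rightarrow> (nat \<Rightarrow> nat) \<Rightarrow> nat set set" where
  "bpsp_edges n x = {{x i, x (i+1)} | i. i \<in> {1..<2*n} \<and> x i \<noteq> x (i+1)
                        \<and> theta n x {x i, x (i+1)} \<noteq> 0}"

definition wt :: "nat \<Rightarrow> (nat \<Rightarrow> nat) \<Rightarrow> (nat \<Rightarrow> colour) \<Rightarrow> int" where
  "wt n x z = (\<Sum>e\<in>bpsp_edges n x. theta n x e *
       iver (\<exists>a b. e = {a, b} \<and> z a \<noteq> z b))"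

end

theory Submission
  imports Defs
begin

text \<open>At each position i the encoded colouring changes exactly when the red-first colouring
  changes, corrected by \<open>\<plusminus>[z(x_i) \<noteq> z(x_{i+1})]\<close>, with sign \<open>-\<close> precisely when \<open>\<eta>(x,i)\<close> holds.
  Summing over i and grouping the positions by the pair \<open>{x_i, x_{i+1}}\<close> turns the correction
  into \<open>-wt\<close>: the grouped coefficients are exactly \<open>\<theta>_x\<close>, and the pairs missing from \<open>G_x\<close>
  either have \<open>\<theta>_x = 0\<close> or are loops, which are never cut. The argument works for every word x.\<close>

lemma iver_doubleton_cut:
  "iver (\<exists>a b. {p, q} = {a, b} \<and> z a \<noteq> z b) = iver (z p \<noteq> z q)"
  unfolding iver_def by (auto simp: doubleton_eq_iff)

lemma sum_image_grouped:
  fixes c :: "'i \<Rightarrow> int" and g :: "'e \<Rightarrow> int"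
  assumes "finite I"
  shows "(\<Sum>e\<in>f ` I. (\<Sum>i\<in>I. c i * iver (e = f i)) * g e) = (\<Sum>i\<in>I. c i * g (f i))"
proof -
  have "(\<Sum>i\<in>I. c i * iver (e = f i)) = (\<Sum>i\<in>{i\<in>I. f i = e}. c i)" for e
  proof -
    have "(\<Sum>i\<in>I. c i * iver (e = f i)) = (\<Sum>i\<in>I. if f i = e then c i else 0)"
      by (rule sum.cong) (auto simp: iver_def)
    then show ?thesis
      using assms by (simp add: sum.inter_filter)
  qed
  then show ?thesis
    using assms by (simp add: sum.image_gen[of I "\<lambda>i. c i * g (f i)" f] sum_distrib_right)
qed

lemma wt_eq_sum_adjacent:
  "wt n x z = - (\<Sum>i=1..<2*n. (if eta x i then -1 else 1) * iver (z (x i) \<noteq> z (x (i+1))))"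
proof -
  define pair where "pair i = {x i, x (i+1)}" for i
  define cut where "cut e = iver (\<exists>a b. e = {a, b} \<and> z a \<noteq> z b)" for e
  define c :: "nat \<Rightarrow> int" where "c i = (if eta x i then -1 else 1)" for i
  let ?S = "pair ` {1..<2*n}"
  have theta: "theta n x e = - (\<Sum>i=1..<2*n. c i * iver (e = pair i))" for e
    unfolding theta_def c_def pair_def ..
  have "wt n x z = (\<Sum>e\<in>bpsp_edges n x. theta n x e * cut e)"
    unfolding wt_def cut_def ..
  also have "\<dots> = (\<Sum>e\<in>?S. theta n x e * cut e)"
  proof (rule sum.mono_neutral_left)
    show "bpsp_edges n x \<subseteq> ?S"
      unfolding bpsp_edges_def pair_def by auto
    show "\<forall>e\<in>?S - bpsp_edges n x. theta n x e * cut e = 0"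
    proof
      fix e assume e: "e \<in> ?S - bpsp_edges n x"
      then obtain i where i: "i \<in> {1..<2*n}" "e = pair i" by auto
      show "theta n x e * cut e = 0"
      proof (cases "x i = x (i+1)")
        case True
        then have "cut e = 0"
          unfolding i(2) cut_def pair_def iver_doubleton_cut by (simp add: iver_def)
        then show ?thesis by simp
      next
        case False
        have "theta n x e \<noteq> 0 \<Longrightarrow> e \<in> bpsp_edges n x"
          using i False unfolding bpsp_edges_def pair_def by auto
        then have "theta n x e = 0" using e by blast
        then show ?thesis by simp
      qed
    qed
  qed simp
  also have "\<dots> = - (\<Sum>e\<in>?S. (\<Sum>i=1..<2*n. c i * iver (e = pair i)) * cut e)"
    unfolding theta by (simp add: sum_negf)
  also have "\<dots> = - (\<Sum>i=1..<2*n. c i * cut (pair i))"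
    unfolding sum_image_grouped[OF finite_atLeastLessThan] ..
  finally show ?thesis
    unfolding cut_def pair_def c_def iver_doubleton_cut .
qed

lemma encode_change_eq:
  "iver (encode x z i \<noteq> encode x z (i+1)) =
   iver (sigma_RF x i \<noteq> sigma_RF x (i+1)) + (if eta x i then -1 else 1) * iver (z (x i) \<noteq> z (x (i+1)))"
  unfolding encode_def sigma_RF_def eta_def iver_def
  by (cases "seen x i"; cases "seen x (i+1)"; cases "z (x i)"; cases "z (x (i+1))"; simp)

lemma xi_tilde_eq_sum_adjacent:
  "xi_tilde n x z = xi n (sigma_RF x)
     + (\<Sum>i=1..<2*n. (if eta x i then -1 else 1) * iver (z (x i) \<noteq> z (x (i+1))))"
  unfolding xi_tilde_def xi_def encode_change_eq by (simp add: sum.distrib)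

theorem proposition7:
  fixes n :: nat and x :: "nat \<Rightarrow> nat" and z :: "nat \<Rightarrow> colour"
  assumes "n \<ge> 1" and "x \<in> Gamma n"
  shows "xi_tilde n x z = xi n (sigma_RF x) - wt n x z"
  unfolding xi_tilde_eq_sum_adjacent wt_eq_sum_adjacent by simp

end
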